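(* Let $\lambda>0$, $L>0$, and let $\{\{x_t(i)\}_{i\in[k]}\}_{t\in[T]}$ be any sequence with $x_t(i)\in\mathbb{R}^d$ and $\|x_t(i)\|_2\le L$ for all $i\in[k]$, $t\in[T]$. Let $V_0=\lambda I$ and $V_t=\lambda I+\sum_{s\in[t]}\sum_{i\in[k]}x_s(i)x_s(i)^\top$. Then $$\sum_{t\in[T]}\sum_{i\in[k]}\mathbb{1}\Big(\|x_t(i)\|_{V_{t-1}^{-1}}>1/\sqrt k\Big)\le 2dk\log\big(1+L^2kT/(d\lambda)\big).$$
   Context: For a positive definite matrix $A$ and vector $x$, $\|x\|_A=\sqrt{x^\top Ax}$; $[n]=\{1,\dots,n\}$. *)

theory Defs
  imports "HOL-Analysis.Analysis"
begin

definition outer :: "real^'n \<Rightarrow> real^'n^'n" where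
  "outer v = (\<chi> a b. v $ a * v $ b)"

definition mnorm :: "real^'n^'n \<Rightarrow> real^'n \<Rightarrow> real" where
  "mnorm A v = sqrt (v \<bullet> (A *v v))"

definition Vmat :: "real \<Rightarrow> nat \<Rightarrow> (nat \<Rightarrow> nat \<Rightarrow> real^'n) \<Rightarrow> nat \<Rightarrow> real^'n^'n" where
  "Vmat lam k x t = lam *\<^sub>R mat 1 + (\<Sum>s\<in>{1..t}. \<Sum>i\<in>{1..k}. outer (x s i))"

end

theory Submission
  imports Defs
begin

text \<open>Let q_t(i) = x_t(i)^T V_{t-1}^{-1} x_t(i). Adding the k rank-one terms of round t one
  at a time, the matrix determinant lemma det (A + u u^T) = det A (1 + u^T A^{-1} u) and the
  Sherman--Morrison bound y^T (A + u u^T)^{-1} y >= y^T A^{-1} y / (1 + u^T A^{-1} u) give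
  det V_t >= det V_{t-1} (1 + sum_i q_t(i)). A counted pair has q_t(i) > 1/k, so if round t has
  c_t <= k counted pairs, then ln det V_t >= ln det V_{t-1} + ln (1 + c_t/k) >= ln det V_{t-1} + c_t/(2k).
  Telescoping from det V_0 = lambda^d and bounding det V_T <= (tr V_T / d)^d <= (lambda + L^2 k T / d)^d
  by Hadamard's inequality and AM--GM gives the claim.\<close>

section \<open>The matrix determinant lemma\<close>

lemma outer_mult_vector: "outer u *v w = (u \<bullet> w) *\<^sub>R u"
  by (simp add: vec_eq_iff outer_def matrix_vector_mult_def inner_vec_def
      sum_distrib_left sum_distrib_right algebra_simps)

lemma trace_outer: "trace (outer v) = (norm v)\<^sup>2"
  by (simp add: trace_def outer_def norm_vec_def L2_set_def sum_nonneg power2_eq_square)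

lemma det_add_row_multiples:
  fixes A :: "'a::field^'n^'n"
  assumes "finite S" "p \<notin> S"
  shows "det (\<chi> i. if i = p then y else if i \<in> S then row i A + c i *s y else row i A)
       = det (\<chi> i. if i = p then y else row i A)"
  using assms
proof (induction S rule: finite_induct)
  case empty
  show ?case by (rule arg_cong[where f=det]) (simp add: vec_eq_iff)
next
  case (insert q S)
  let ?M = "(\<chi> i. if i = p then y else if i \<in> insert q S then row i A + c i *s y else row i A) :: 'a^'n^'n"
  have pq: "p \<noteq> q" using insert by auto
  have "(- c q) *s y \<in> vec.span {row j ?M |j. j \<noteq> q}"
    using pq by (intro vec.span_scale vec.span_base) (auto simp: row_def intro!: exI[of _ p])
  then have "det (\<chi> i. if i = q then row q ?M + (- c q) *s y else row i ?M) = det ?M"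
    by (rule det_row_span)
  moreover have "(\<chi> i. if i = q then row q ?M + (- c q) *s y else row i ?M)
      = (\<chi> i. if i = p then y else if i \<in> S then row i A + c i *s y else row i A)"
    using pq insert(2) by (simp add: vec_eq_iff row_def algebra_simps)
  ultimately show ?case using insert by simp
qed

lemma det_add_outer_rows:
  fixes A :: "'a::field^'n^'n"
  assumes "transpose A *v w = y" "finite S"
  shows "det (\<chi> i. if i \<in> S then row i A + y$i *s y else row i A) = det A * (1 + (\<Sum>i\<in>S. y$i * w$i))"
  using assms(2)
proof (induction S rule: finite_induct)
  case empty
  have "(\<chi> i. row i A) = A" by (simp add: vec_eq_iff row_def)
  then show ?case by simp
next
  case (insert p S)
  have y_rows: "y = (\<Sum>i\<in>UNIV. w$i *s row i A)"
    using assms(1) by (simp add: vec_eq_iff matrix_vector_mult_def transpose_def row_def sum_component mult.commute)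
  let ?r = "\<lambda>i. if i \<in> S then row i A + y$i *s y else row i A"
  have "det (\<chi> i. if i \<in> insert p S then row i A + y$i *s y else row i A)
      = det (\<chi> i. if i = p then row p A + y$p *s y else ?r i)"
    by (rule arg_cong[where f=det]) (auto simp: vec_eq_iff)
  also have "\<dots> = det (\<chi> i. if i = p then row p A else ?r i) + det (\<chi> i. if i = p then y$p *s y else ?r i)"
    by (rule det_row_add)
  also have "det (\<chi> i. if i = p then row p A else ?r i) = det (\<chi> i. ?r i)"
    using insert by (intro arg_cong[where f=det]) (auto simp: vec_eq_iff)
  also have "det (\<chi> i. if i = p then y$p *s y else ?r i) = y$p * det (\<chi> i. if i = p then y else ?r i)"
    by (rule det_row_mul)
  also have "det (\<chi> i. if i = p then y else ?r i) = det (\<chi> i. if i = p then y else row i A)"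
    using insert by (intro det_add_row_multiples) auto
  also have "\<dots> = w$p * det A"
    unfolding y_rows by (rule cramer_lemma_transpose)
  finally show ?case using insert by (simp add: algebra_simps)
qed

text \<open>The matrix determinant lemma; \<open>w\<close> plays the role of \<open>A\<^sup>-\<^sup>T y\<close>.\<close>
lemma det_add_outer:
  fixes A :: "real^'n^'n"
  assumes "transpose A *v w = y"
  shows "det (A + outer y) = det A * (1 + y \<bullet> w)"
proof -
  have "A + outer y = (\<chi> i. if i \<in> UNIV then row i A + y$i *s y else row i A)"
    by (simp add: vec_eq_iff outer_def row_def)
  then show ?thesis
    using det_add_outer_rows[OF assms, of UNIV] by (simp add: inner_vec_def)
qed

section \<open>Positive definite matrices and Hadamard's inequality\<close>

definition pos_def :: "real^'n^'n \<Rightarrow> bool" where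
  "pos_def A \<longleftrightarrow> transpose A = A \<and> (\<forall>v. v \<noteq> 0 \<longrightarrow> 0 < v \<bullet> (A *v v))"

lemma pos_def_transpose: "pos_def A \<Longrightarrow> transpose A = A"
  by (simp add: pos_def_def)

lemma pos_def_pos: "pos_def A \<Longrightarrow> v \<noteq> 0 \<Longrightarrow> 0 < v \<bullet> (A *v v)"
  by (simp add: pos_def_def)

lemma pos_def_nonneg: "pos_def A \<Longrightarrow> 0 \<le> v \<bullet> (A *v v)"
  using pos_def_pos[of A v] by (cases "v = 0") auto

lemma symmetric_matrix_nth: "transpose A = A \<Longrightarrow> A$i$j = A$j$i"
  by (metis transpose_def vec_lambda_beta)

lemma pos_def_diag_pos:
  assumes "pos_def A"
  shows "0 < A$i$i"
proof -
  have "0 < axis i 1 \<bullet> (A *v axis i 1)"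
    using pos_def_pos[OF assms] by (simp add: axis_eq_0_iff)
  then show ?thesis
    by (simp add: inner_vec_def matrix_vector_mult_def axis_def
        if_distrib[of "\<lambda>x. _ * x"] if_distrib[of "\<lambda>x. x * _"] cong: if_cong)
qed

lemma inner_matrix_vector_transpose: "(A *v x) \<bullet> (y::real^'n) = x \<bullet> (transpose A *v y)"
  by (metis dot_lmul_matrix vector_transpose_matrix)

lemma pos_def_congruence:
  fixes A E :: "real^'n^'n"
  assumes "pos_def A" "invertible E"
  shows "pos_def (E ** A ** transpose E)"
proof -
  have "invertible (transpose E)"
    using assms(2) by (simp add: invertible_det_nz)
  then have "inj ((*v) (transpose E))"
    by (rule inj_matrix_vector_mult)
  have "0 < v \<bullet> ((E ** A ** transpose E) *v v)" if "v \<noteq> 0" for v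
  proof -
    have "transpose E *v v \<noteq> 0"
      using \<open>inj _\<close> that by (metis injD matrix_vector_mult_0_right)
    then have "0 < (transpose E *v v) \<bullet> (A *v (transpose E *v v))"
      by (rule pos_def_pos[OF assms(1)])
    also have "\<dots> = (A *v (transpose E *v v)) \<bullet> (transpose E *v v)"
      by (rule inner_commute)
    also have "\<dots> = v \<bullet> (E *v (A *v (transpose E *v v)))"
      by (rule sym, rule trans[OF inner_commute inner_matrix_vector_transpose])
    also have "\<dots> = v \<bullet> ((E ** A ** transpose E) *v v)"
      by (simp only: matrix_vector_mul_assoc matrix_mul_assoc)
    finally show ?thesis .
  qed
  moreover have "transpose (E ** A ** transpose E) = E ** A ** transpose E"
    by (simp add: matrix_transpose_mul matrix_mul_assoc pos_def_transpose[OF assms(1)])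
  ultimately show ?thesis
    by (simp add: pos_def_def)
qed

definition pivot_elim :: "real^'n^'n \<Rightarrow> 'n \<Rightarrow> real^'n^'n" where
  "pivot_elim A p = mat 1 - (\<chi> i k. if k = p \<and> i \<noteq> p then A$i$p / A$p$p else 0)"

lemma det_pivot_elim:
  fixes A :: "real^'n^'n"
  shows "det (pivot_elim A p) = 1"
proof -
  define x :: "real^'n" where "x = (\<chi> k. if k = p then 1 else - A$k$p / A$p$p)"
  have x_rows: "(\<Sum>l\<in>UNIV. x$l *s row l (mat 1 :: real^'n^'n)) = x"
    by (simp add: vec_eq_iff sum_component row_def mat_def if_distrib[of "\<lambda>x. _ * x"] cong: if_cong)
  have "transpose (pivot_elim A p)
      = (\<chi> i. if i = p then (\<Sum>l\<in>UNIV. x$l *s row l (mat 1 :: real^'n^'n)) else row i (mat 1))"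
    unfolding x_rows by (auto simp: vec_eq_iff pivot_elim_def x_def transpose_def row_def mat_def)
  then have "det (transpose (pivot_elim A p)) = x$p * det (mat 1 :: real^'n^'n)"
    by (simp only: cramer_lemma_transpose)
  then show ?thesis by (simp add: x_def)
qed

lemma elim_congruence_nth:
  fixes A :: "real^'n^'n" and r :: "real^'n" and p :: 'n
  defines "E \<equiv> mat 1 - (\<chi> i k. if k = p then r$i else 0)"
  shows "(E ** A ** transpose E)$i$j = A$i$j - r$j * A$i$p - r$i * A$p$j + r$i * r$j * A$p$p"
  unfolding E_def
  by (simp add: matrix_matrix_mult_def transpose_def mat_def algebra_simps sum.distrib
      sum_subtractf if_distrib[of "\<lambda>x. x * _"] if_distrib[of "\<lambda>x. _ * x"] sum.If_cases
      sum_distrib_left sum_distrib_right cong: if_cong)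

text \<open>Symmetric Gaussian elimination of the off-diagonal entries in row and column \<open>p\<close>;
  the remaining block becomes the Schur complement.\<close>
lemma pivot_elim_congruence_nth:
  fixes A :: "real^'n^'n"
  assumes "transpose A = A" "A$p$p \<noteq> 0"
  shows "(pivot_elim A p ** A ** transpose (pivot_elim A p))$i$j =
    (if i = p \<and> j = p then A$p$p else if i = p \<or> j = p then 0
     else A$i$j - A$i$p * A$p$j / A$p$p)"
proof -
  define r :: "real^'n" where "r = (\<chi> i. if i = p then 0 else A$i$p / A$p$p)"
  have E: "pivot_elim A p = mat 1 - (\<chi> i k. if k = p then r$i else 0)"
    by (simp add: pivot_elim_def r_def vec_eq_iff)
  have "(pivot_elim A p ** A ** transpose (pivot_elim A p))$i$j
      = A$i$j - r$j * A$i$p - r$i * A$p$j + r$i * r$j * A$p$p"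
    unfolding E by (rule elim_congruence_nth)
  also have "\<dots> = (if i = p \<and> j = p then A$p$p else if i = p \<or> j = p then 0
     else A$i$j - A$i$p * A$p$j / A$p$p)"
  proof (cases "j = p")
    case True
    then show ?thesis using assms(2) by (simp add: r_def)
  next
    case False
    then show ?thesis
      using assms(2) symmetric_matrix_nth[OF assms(1), of j p] by (simp add: r_def field_simps)
  qed
  finally show ?thesis .
qed

text \<open>Induction on a set \<open>S\<close> containing every index of a nonzero off-diagonal entry: the
  symmetric elimination step at \<open>p \<in> S\<close> clears row and column \<open>p\<close>, keeps the determinant and
  positive definiteness, and does not increase the diagonal.\<close>
lemma pos_def_det_bounds_support:
  fixes A :: "real^'n^'n"
  assumes "finite S" "pos_def A" "\<And>i j. i \<noteq> j \<Longrightarrow> A$i$j \<noteq> 0 \<Longrightarrow> i \<in> S \<and> j \<in> S"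
  shows "0 < det A \<and> det A \<le> (\<Prod>i\<in>UNIV. A$i$i)"
  using assms
proof (induction S arbitrary: A rule: finite_induct)
  case empty
  then have "det A = (\<Prod>i\<in>UNIV. A$i$i)"
    by (intro det_diagonal) blast
  moreover have "0 < (\<Prod>i\<in>UNIV. A$i$i)"
    using empty pos_def_diag_pos by (intro prod_pos) auto
  ultimately show ?case by simp
next
  case (insert p S)
  define E where "E = pivot_elim A p"
  define B where "B = E ** A ** transpose E"
  have sym: "transpose A = A" and App: "0 < A$p$p"
    using insert.prems(1) by (auto intro: pos_def_transpose pos_def_diag_pos)
  have B_nth: "B$i$j = (if i = p \<and> j = p then A$p$p else if i = p \<or> j = p then 0
     else A$i$j - A$i$p * A$p$j / A$p$p)" for i j
    unfolding B_def E_def using sym App by (intro pivot_elim_congruence_nth) auto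
  have "det E = 1"
    unfolding E_def by (rule det_pivot_elim)
  then have det_B: "det B = det A"
    by (simp add: B_def det_mul)
  have pos_B: "pos_def B"
    unfolding B_def using insert.prems(1) \<open>det E = 1\<close>
    by (intro pos_def_congruence) (auto simp: invertible_det_nz)
  have "i \<in> S \<and> j \<in> S" if "i \<noteq> j" "B$i$j \<noteq> 0" for i j
  proof -
    have "i \<noteq> p" "j \<noteq> p" "A$i$j \<noteq> 0 \<or> (A$i$p \<noteq> 0 \<and> A$p$j \<noteq> 0)"
      using that B_nth[of i j] by (auto split: if_splits)
    then show ?thesis
      using insert.prems(2)[of i j] insert.prems(2)[of i p] insert.prems(2)[of p j] that(1) by auto
  qed
  then have "0 < det B \<and> det B \<le> (\<Prod>i\<in>UNIV. B$i$i)"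
    using pos_B by (intro insert.IH) auto
  moreover have "(\<Prod>i\<in>UNIV. B$i$i) \<le> (\<Prod>i\<in>UNIV. A$i$i)"
  proof (intro prod_mono conjI)
    fix i
    show "0 \<le> B$i$i" using pos_def_diag_pos[OF pos_B] by (rule less_imp_le)
    have "0 \<le> A$i$p * A$p$i / A$p$p"
      using App by (simp add: symmetric_matrix_nth[OF sym, of p i])
    then show "B$i$i \<le> A$i$i" by (simp add: B_nth)
  qed
  ultimately show ?case using det_B by simp
qed

lemma pos_def_det_pos: "pos_def A \<Longrightarrow> 0 < det A"
  using pos_def_det_bounds_support[of UNIV A] by simp

lemma pos_def_det_le_prod_diag: "pos_def A \<Longrightarrow> det A \<le> (\<Prod>i\<in>UNIV. A$i$i)"
  using pos_def_det_bounds_support[of UNIV A] by simp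

section \<open>Quadratic forms of inverses and the Sherman--Morrison update\<close>

lemma invertible_matrix_inv:
  assumes "invertible A"
  shows "A ** matrix_inv A = mat 1" "matrix_inv A ** A = mat 1"
proof -
  have "\<exists>A'. A ** A' = mat 1 \<and> A' ** A = mat 1"
    using assms by (simp add: invertible_def)
  then have "A ** matrix_inv A = mat 1 \<and> matrix_inv A ** A = mat 1"
    unfolding matrix_inv_def by (rule someI_ex)
  then show "A ** matrix_inv A = mat 1" "matrix_inv A ** A = mat 1" by auto
qed

lemma pos_def_invertible: "pos_def A \<Longrightarrow> invertible A"
  by (simp add: invertible_det_nz pos_def_det_pos less_imp_neq[symmetric])

lemma pos_def_inner_commute: "pos_def A \<Longrightarrow> x \<bullet> (A *v y) = y \<bullet> (A *v x)"
  by (metis inner_commute inner_matrix_vector_transpose pos_def_transpose)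

lemma transpose_matrix_inv_symmetric:
  fixes A :: "'a::comm_semiring_1^'n^'n"
  assumes "transpose A = A" "invertible A"
  shows "transpose (matrix_inv A) = matrix_inv A"
proof -
  note inv = invertible_matrix_inv[OF assms(2)]
  have left_inv: "transpose (matrix_inv A) ** A = mat 1"
    using inv(1) assms(1) by (metis matrix_transpose_mul transpose_mat)
  have "transpose (matrix_inv A) = transpose (matrix_inv A) ** (A ** matrix_inv A)"
    by (simp add: inv(1))
  also have "\<dots> = matrix_inv A"
    by (simp add: matrix_mul_assoc left_inv)
  finally show ?thesis .
qed

lemma pos_def_matrix_inv:
  assumes "pos_def A"
  shows "pos_def (matrix_inv A)"
proof -
  have inv: "A ** matrix_inv A = mat 1"
    using invertible_matrix_inv(1)[OF pos_def_invertible[OF assms]] .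
  have "0 < z \<bullet> (matrix_inv A *v z)" if "z \<noteq> 0" for z
  proof -
    define w where "w = matrix_inv A *v z"
    have Aw: "A *v w = z"
      by (simp add: w_def matrix_vector_mul_assoc inv)
    then have "w \<noteq> 0" using that by auto
    then have "0 < w \<bullet> (A *v w)" by (rule pos_def_pos[OF assms])
    then show ?thesis
      using Aw by (simp add: w_def inner_commute)
  qed
  then show ?thesis
    using transpose_matrix_inv_symmetric pos_def_transpose[OF assms] pos_def_invertible[OF assms]
    by (simp add: pos_def_def)
qed

definition inv_quad_form :: "real^'n^'n \<Rightarrow> real^'n \<Rightarrow> real" where
  "inv_quad_form A y = y \<bullet> (matrix_inv A *v y)"

lemma mnorm_matrix_inv: "mnorm (matrix_inv A) y = sqrt (inv_quad_form A y)"
  by (simp add: mnorm_def inv_quad_form_def)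

lemma inv_quad_form_nonneg: "pos_def A \<Longrightarrow> 0 \<le> inv_quad_form A y"
  unfolding inv_quad_form_def by (intro pos_def_nonneg pos_def_matrix_inv)

lemma pos_def_cauchy_schwarz:
  assumes "pos_def A"
  shows "(x \<bullet> (A *v y))\<^sup>2 \<le> (x \<bullet> (A *v x)) * (y \<bullet> (A *v y))"
proof (cases "y = 0")
  case True then show ?thesis by simp
next
  case False
  define t where "t = (x \<bullet> (A *v y)) / (y \<bullet> (A *v y))"
  have pos: "0 < y \<bullet> (A *v y)" using pos_def_pos[OF assms False] .
  have "0 \<le> (x - t *\<^sub>R y) \<bullet> (A *v (x - t *\<^sub>R y))"
    by (rule pos_def_nonneg[OF assms])
  also have "\<dots> = x \<bullet> (A *v x) - (x \<bullet> (A *v y))\<^sup>2 / (y \<bullet> (A *v y))"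
    using pos pos_def_inner_commute[OF assms, of y x]
    by (simp add: t_def algebra_simps inner_diff_left inner_diff_right power2_eq_square)
  finally show ?thesis
    using pos by (simp add: field_simps)
qed

lemma pos_def_add_outer:
  assumes "pos_def A"
  shows "pos_def (A + outer u)"
proof -
  have "0 < v \<bullet> ((A + outer u) *v v)" if "v \<noteq> 0" for v
  proof -
    have "v \<bullet> ((A + outer u) *v v) = v \<bullet> (A *v v) + (u \<bullet> v)\<^sup>2"
      by (simp add: matrix_vector_mult_add_rdistrib outer_mult_vector inner_add_right
          power2_eq_square inner_commute)
    then show ?thesis
      using pos_def_pos[OF assms that] by (simp add: add_pos_nonneg)
  qed
  moreover have "transpose (A + outer u) = A + outer u"
    using pos_def_transpose[OF assms] by (simp add: vec_eq_iff transpose_def outer_def)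
  ultimately show ?thesis
    by (simp add: pos_def_def)
qed

lemma pos_def_add_sum_outer:
  "finite I \<Longrightarrow> pos_def A \<Longrightarrow> pos_def (A + (\<Sum>i\<in>I. outer (y i)))"
proof (induction I arbitrary: A rule: finite_induct)
  case (insert j I)
  then have "pos_def ((A + outer (y j)) + (\<Sum>i\<in>I. outer (y i)))"
    by (intro insert.IH pos_def_add_outer)
  then show ?case
    using insert(1,2) by (simp add: algebra_simps)
qed simp

text \<open>The Sherman--Morrison formula, in the form of the quadratic forms it induces.\<close>
lemma inv_quad_form_add_outer:
  assumes "pos_def A"
  shows "inv_quad_form (A + outer u) y
    = inv_quad_form A y - (u \<bullet> (matrix_inv A *v y))\<^sup>2 / (1 + inv_quad_form A u)"
proof -
  define w where "w = matrix_inv (A + outer u) *v y"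
  define a where "a = matrix_inv A *v u"
  define p where "p = matrix_inv A *v y"
  have inv_A: "matrix_inv A ** A = mat 1"
    using invertible_matrix_inv(2)[OF pos_def_invertible[OF assms]] .
  have "(A + outer u) *v w = y"
    using invertible_matrix_inv(1)[OF pos_def_invertible[OF pos_def_add_outer[OF assms]]]
    by (simp add: w_def matrix_vector_mul_assoc)
  then have "A *v w + (u \<bullet> w) *\<^sub>R u = y"
    by (simp add: matrix_vector_mult_add_rdistrib outer_mult_vector)
  then have "matrix_inv A *v (A *v w + (u \<bullet> w) *\<^sub>R u) = p"
    by (simp add: p_def)
  then have w_eq: "w + (u \<bullet> w) *\<^sub>R a = p"
    by (simp add: matrix_vector_right_distrib matrix_vector_mult_scaleR matrix_vector_mul_assoc
        inv_A a_def)
  have qa: "0 \<le> u \<bullet> a"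
    using inv_quad_form_nonneg[OF assms] by (simp add: inv_quad_form_def a_def)
  have "(u \<bullet> w) * (1 + u \<bullet> a) = u \<bullet> p"
    using arg_cong[OF w_eq, of "inner u"] by (simp add: inner_add_right algebra_simps)
  then have uw: "u \<bullet> w = (u \<bullet> p) / (1 + u \<bullet> a)"
    using qa by (simp add: field_simps)
  have ya: "y \<bullet> a = u \<bullet> p"
    using pos_def_inner_commute[OF pos_def_matrix_inv[OF assms]] by (simp add: a_def p_def)
  have "y \<bullet> w + (u \<bullet> w) * (u \<bullet> p) = y \<bullet> p"
    using arg_cong[OF w_eq, of "inner y"] ya by (simp add: inner_add_right)
  then show ?thesis
    unfolding inv_quad_form_def using uw
    by (simp add: w_def a_def p_def power2_eq_square)
qed

lemma inv_quad_form_add_outer_ge: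
  assumes "pos_def A"
  shows "inv_quad_form A y / (1 + inv_quad_form A u) \<le> inv_quad_form (A + outer u) y"
proof -
  have inv_pos: "pos_def (matrix_inv A)"
    using pos_def_matrix_inv[OF assms] .
  have qu: "0 \<le> inv_quad_form A u"
    using inv_quad_form_nonneg[OF assms] .
  have "(u \<bullet> (matrix_inv A *v y))\<^sup>2 \<le> inv_quad_form A u * inv_quad_form A y"
    unfolding inv_quad_form_def by (rule pos_def_cauchy_schwarz[OF inv_pos])
  then have "(u \<bullet> (matrix_inv A *v y))\<^sup>2 / (1 + inv_quad_form A u)
      \<le> inv_quad_form A u * inv_quad_form A y / (1 + inv_quad_form A u)"
    using qu by (intro divide_right_mono) auto
  moreover have "inv_quad_form A u * inv_quad_form A y / (1 + inv_quad_form A u)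
      = inv_quad_form A y - inv_quad_form A y / (1 + inv_quad_form A u)"
    using qu by (simp add: field_simps)
  ultimately show ?thesis
    unfolding inv_quad_form_add_outer[OF assms] by linarith
qed

section \<open>Growth of the Gram determinant\<close>

lemma det_add_outer_pos_def:
  assumes "pos_def A"
  shows "det (A + outer u) = det A * (1 + inv_quad_form A u)"
proof -
  have "transpose A *v (matrix_inv A *v u) = u"
    using invertible_matrix_inv(1)[OF pos_def_invertible[OF assms]]
    by (simp add: pos_def_transpose[OF assms] matrix_vector_mul_assoc)
  then show ?thesis
    unfolding inv_quad_form_def by (rule det_add_outer)
qed

lemma det_add_sum_outer_ge:
  "finite I \<Longrightarrow> pos_def A
    \<Longrightarrow> det A * (1 + (\<Sum>i\<in>I. inv_quad_form A (y i))) \<le> det (A + (\<Sum>i\<in>I. outer (y i)))"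
proof (induction I arbitrary: A rule: finite_induct)
  case (insert j I)
  define A' where "A' = A + outer (y j)"
  define q where "q = inv_quad_form A (y j)"
  have q: "0 \<le> q"
    unfolding q_def using inv_quad_form_nonneg[OF insert.prems] .
  have det_A': "det A' = det A * (1 + q)"
    unfolding A'_def q_def by (rule det_add_outer_pos_def[OF insert.prems])
  have "(\<Sum>i\<in>I. inv_quad_form A (y i)) / (1 + q) = (\<Sum>i\<in>I. inv_quad_form A (y i) / (1 + q))"
    by (simp add: sum_divide_distrib)
  also have "\<dots> \<le> (\<Sum>i\<in>I. inv_quad_form A' (y i))"
    unfolding A'_def q_def by (intro sum_mono inv_quad_form_add_outer_ge[OF insert.prems])
  finally have sum_le: "(\<Sum>i\<in>I. inv_quad_form A (y i)) / (1 + q) \<le> (\<Sum>i\<in>I. inv_quad_form A' (y i))" .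
  have "det A * (1 + (\<Sum>i\<in>insert j I. inv_quad_form A (y i)))
      = det A * (1 + q) * (1 + (\<Sum>i\<in>I. inv_quad_form A (y i)) / (1 + q))"
    using insert(1,2) q by (simp add: q_def field_simps)
  also have "\<dots> \<le> det A' * (1 + (\<Sum>i\<in>I. inv_quad_form A' (y i)))"
    unfolding det_A' using sum_le pos_def_det_pos[OF insert.prems] q by (intro mult_left_mono) auto
  also have "\<dots> \<le> det (A' + (\<Sum>i\<in>I. outer (y i)))"
    unfolding A'_def by (intro insert.IH pos_def_add_outer insert.prems)
  finally show ?case
    using insert(1,2) by (simp add: A'_def algebra_simps)
qed simp

lemma ln_det_le_trace:
  fixes A :: "real^'n^'n"
  assumes "pos_def A"
  shows "ln (det A) \<le> CARD('n) * ln (trace A / CARD('n))"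
proof -
  have diag: "0 < A$i$i" for i
    using pos_def_diag_pos[OF assms] .
  have "ln (det A) \<le> ln (\<Prod>i\<in>UNIV. A$i$i)"
    using pos_def_det_pos[OF assms] pos_def_det_le_prod_diag[OF assms] by simp
  also have "\<dots> = CARD('n) * (\<Sum>i\<in>UNIV. (1 / CARD('n)) * ln (A$i$i))"
    using diag by (simp add: ln_prod less_imp_neq[symmetric] sum_distrib_left)
  also have "\<dots> \<le> CARD('n) * ln (\<Sum>i\<in>UNIV. (1 / CARD('n)) *\<^sub>R A$i$i)"
    using diag by (intro mult_left_mono concave_on_sum[OF _ _ ln_concave]) auto
  also have "\<dots> = CARD('n) * ln (trace A / CARD('n))"
    by (simp add: trace_def sum_divide_distrib)
  finally show ?thesis .
qed

lemma ln_one_plus_ge_half: "0 \<le> (u::real) \<Longrightarrow> u \<le> 1 \<Longrightarrow> u / 2 \<le> ln (1 + u)"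
proof -
  assume u: "0 \<le> u" "u \<le> 1"
  have "ln (1 / (1 + u)) \<le> 1 / (1 + u) - 1"
    using u by (intro ln_le_minus_one) simp
  then have "u / (1 + u) \<le> ln (1 + u)"
    using u by (simp add: ln_div field_simps)
  moreover have "u / 2 \<le> u / (1 + u)"
    using u by (intro divide_left_mono) auto
  ultimately show ?thesis by linarith
qed

lemma ln_det_add_sum_outer_ge:
  fixes A :: "real^'n^'n"
  assumes "pos_def A" "0 < k"
  shows "ln (det A)
      + (\<Sum>i\<in>{1..k}. if mnorm (matrix_inv A) (y i) > 1 / sqrt (real k) then 1 else 0) / (2 * real k)
    \<le> ln (det (A + (\<Sum>i\<in>{1..k}. outer (y i))))"
proof -
  define c where
    "c = (\<Sum>i\<in>{1..k}. if mnorm (matrix_inv A) (y i) > 1 / sqrt (real k) then 1 else 0 :: real)"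
  have indicator_le:
    "(if mnorm (matrix_inv A) (y i) > 1 / sqrt (real k) then 1 else 0) / real k \<le> inv_quad_form A (y i)"
    for i
  proof (cases "mnorm (matrix_inv A) (y i) > 1 / sqrt (real k)")
    case True
    then have "sqrt (1 / real k) < sqrt (inv_quad_form A (y i))"
      by (simp add: mnorm_matrix_inv real_sqrt_divide)
    then show ?thesis
      using True by simp
  next
    case False
    then show ?thesis
      using inv_quad_form_nonneg[OF assms(1)] by simp
  qed
  have c_le_sum: "c / k \<le> (\<Sum>i\<in>{1..k}. inv_quad_form A (y i))"
    unfolding c_def sum_divide_distrib by (intro sum_mono indicator_le)
  have "0 \<le> c"
    unfolding c_def by (intro sum_nonneg) auto
  moreover have "c \<le> (\<Sum>i\<in>{1..k}. 1)"
    unfolding c_def by (intro sum_mono) auto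
  ultimately have c_bounds: "0 \<le> c / k" "c / k \<le> 1"
    using assms(2) by auto
  have det_pos: "0 < det A"
    using pos_def_det_pos[OF assms(1)] .
  have "ln (det A) + c / (2 * real k) \<le> ln (det A) + ln (1 + c / k)"
    using ln_one_plus_ge_half[OF c_bounds] by simp
  also have "\<dots> = ln (det A * (1 + c / k))"
    using det_pos c_bounds by (simp add: ln_mult)
  also have "\<dots> \<le> ln (det A * (1 + (\<Sum>i\<in>{1..k}. inv_quad_form A (y i))))"
    using det_pos c_bounds c_le_sum by simp
  also have "\<dots> \<le> ln (det (A + (\<Sum>i\<in>{1..k}. outer (y i))))"
    using det_pos c_bounds c_le_sum det_add_sum_outer_ge[OF _ assms(1), of "{1..k}" y]
    by (intro ln_mono) (auto intro: add_nonneg_nonneg)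
  finally show ?thesis
    by (simp add: c_def)
qed

lemma Vmat_0: "Vmat lam k x 0 = lam *\<^sub>R mat 1"
  by (simp add: Vmat_def)

lemma Vmat_Suc: "Vmat lam k x (Suc t) = Vmat lam k x t + (\<Sum>i\<in>{1..k}. outer (x (Suc t) i))"
  by (simp add: Vmat_def algebra_simps)

lemma pos_def_scaleR_mat:
  assumes "0 < lam"
  shows "pos_def (lam *\<^sub>R mat 1 :: real^'n^'n)"
proof -
  have "transpose (lam *\<^sub>R mat 1 :: real^'n^'n) = lam *\<^sub>R mat 1"
    by (simp add: vec_eq_iff transpose_def mat_def)
  then show ?thesis
    using assms by (simp add: pos_def_def flip: scaleR_matrix_vector_assoc)
qed

lemma pos_def_Vmat: "0 < lam \<Longrightarrow> pos_def (Vmat lam k x t)"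
  by (induction t) (auto simp: Vmat_0 Vmat_Suc pos_def_scaleR_mat intro: pos_def_add_sum_outer)

lemma trace_sum: "trace (\<Sum>i\<in>I. A i) = (\<Sum>i\<in>I. trace (A i))"
  by (simp add: trace_def sum.swap[of _ I])

lemma trace_Vmat:
  "trace (Vmat lam k x t) = lam * CARD('n) + (\<Sum>s\<in>{1..t}. \<Sum>i\<in>{1..k}. (norm (x s i :: real^'n))\<^sup>2)"
proof -
  have "trace (lam *\<^sub>R mat 1 :: real^'n^'n) = lam * CARD('n)"
    by (simp add: trace_def mat_def)
  then show ?thesis
    by (simp add: Vmat_def trace_add trace_sum trace_outer)
qed

lemma ln_det_Vmat_ge:
  fixes x :: "nat \<Rightarrow> nat \<Rightarrow> real^'n"
  assumes "0 < lam" "0 < k"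
  shows "CARD('n) * ln lam
      + (\<Sum>t\<in>{1..n}. \<Sum>i\<in>{1..k}.
          (if mnorm (matrix_inv (Vmat lam k x (t - 1))) (x t i) > 1 / sqrt (real k) then 1 else 0))
        / (2 * real k)
    \<le> ln (det (Vmat lam k x n))"
proof (induction n)
  case 0
  have "det (lam *\<^sub>R mat 1 :: real^'n^'n) = lam ^ CARD('n)"
    by (subst det_diagonal) (simp_all add: mat_def)
  then show ?case
    using assms(1) by (simp add: Vmat_0 ln_realpow)
next
  case (Suc n)
  then show ?case
    using ln_det_add_sum_outer_ge[OF pos_def_Vmat[OF assms(1)] assms(2), of k x n "x (Suc n)"]
    by (simp add: Vmat_Suc add_divide_distrib)
qed

lemma ln_det_Vmat_le:
  fixes lam L :: real and x :: "nat \<Rightarrow> nat \<Rightarrow> real^'n"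
  assumes "0 < lam" "\<And>t i. t \<in> {1..T} \<Longrightarrow> i \<in> {1..k} \<Longrightarrow> norm (x t i) \<le> L"
  shows "ln (det (Vmat lam k x T))
    \<le> CARD('n) * (ln lam + ln (1 + L\<^sup>2 * real k * real T / (CARD('n) * lam)))"
proof -
  define M where "M = 1 + L\<^sup>2 * real k * real T / (CARD('n) * lam)"
  have "trace (Vmat lam k x T) \<le> lam * CARD('n) + (\<Sum>t\<in>{1..T}. \<Sum>i\<in>{1..k}. L\<^sup>2)"
    unfolding trace_Vmat using assms(2) by (intro add_left_mono sum_mono power_mono) auto
  then have "trace (Vmat lam k x T) / CARD('n) \<le> lam + L\<^sup>2 * real k * real T / CARD('n)"
    by (simp add: field_simps)
  also have "\<dots> = lam * M"
    using assms(1) by (simp add: M_def field_simps)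
  finally have trace_le: "trace (Vmat lam k x T) / CARD('n) \<le> lam * M" .
  have "0 < trace (Vmat lam k x T)"
    using trace_Vmat[of lam k x T] assms(1) by (simp add: add_pos_nonneg sum_nonneg)
  then have "ln (trace (Vmat lam k x T) / CARD('n)) \<le> ln (lam * M)"
    using trace_le by (intro ln_mono) simp_all
  also have "\<dots> = ln lam + ln M"
    using assms(1) by (intro ln_mult_pos) (auto simp: M_def intro!: add_pos_nonneg)
  finally have "ln (trace (Vmat lam k x T) / CARD('n)) \<le> ln lam + ln M" .
  then have "CARD('n) * ln (trace (Vmat lam k x T) / CARD('n)) \<le> CARD('n) * (ln lam + ln M)"
    by (intro mult_left_mono) auto
  with ln_det_le_trace[OF pos_def_Vmat[OF assms(1)]] show ?thesis
    unfolding M_def by (rule order_trans)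
qed

theorem lemma6:
  fixes lam L :: real and k T :: nat and x :: "nat \<Rightarrow> nat \<Rightarrow> real^'n"
  assumes "lam > 0" and "L > 0"
    and "\<And>t i. t \<in> {1..T} \<Longrightarrow> i \<in> {1..k} \<Longrightarrow> norm (x t i) \<le> L"
  shows "(\<Sum>t\<in>{1..T}. \<Sum>i\<in>{1..k}.
            (if mnorm (matrix_inv (Vmat lam k x (t - 1))) (x t i) > 1 / sqrt (real k) then 1 else 0))
         \<le> 2 * real CARD('n) * real k
             * ln (1 + L\<^sup>2 * real k * real T / (real CARD('n) * lam))"
proof (cases "k = 0")
  case False
  have "CARD('n) * ln lam
      + (\<Sum>t\<in>{1..T}. \<Sum>i\<in>{1..k}.
          (if mnorm (matrix_inv (Vmat lam k x (t - 1))) (x t i) > 1 / sqrt (real k) then 1 else 0))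
        / (2 * real k)
    \<le> ln (det (Vmat lam k x T))"
    using assms(1) False by (intro ln_det_Vmat_ge) auto
  also have "\<dots> \<le> CARD('n) * (ln lam + ln (1 + L\<^sup>2 * real k * real T / (CARD('n) * lam)))"
    using assms(1,3) by (intro ln_det_Vmat_le) auto
  finally show ?thesis
    using False by (simp add: field_simps)
qed simp

end
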